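(* Let $S$ be the output of Algorithm 1 and let $\epsilon>0$. For each $c\in C$, \[ \Pr\left[f_c(S)\le\left(1-\frac1e-\epsilon\right)\mathrm{OPT}\right]\;\le\;\exp\left(-\frac{\epsilon^2\,\mathrm{OPT}}{4M_c}\right), \] where $M_c=\max_{v\in V} f_c(v\mid\emptyset)$ (assumed positive).
   Context: Setup: $V$ is a finite nonempty ground set, $C$ is a finite nonempty set of "colors", $k=|C|$. For each $c\in C$, $f_c\colon 2^V\to\mathbb{R}_{\ge 0}$ is monotone and submodular. $B$ is a positive integer (the budget). $f(T\mid S)=f(S\cup T)-f(S)$ and $f(v\mid S)=f(\{v\}\mid S)$. $\mathrm{OPT}=\max_{S\subseteq V,\,|S|\le B}\min_{c\in C} f_c(S)$. $\Delta_V$ is the probability simplex over $V$. Algorithm 1 (assumes $\mathrm{OPT}$ known): set $S^{(0)}=\emptyset$; for $i=1,\dots,B$: choose any $x^{(i)}\in\Delta_V$ (the choice may depend arbitrarily on the history) such that $\sum_{v\in V}x^{(i)}_v f_c(v\mid S^{(i-1)})\ge \frac1B(\mathrm{OPT}-f_c(S^{(i-1)}))$ for all $c\in C$ (such $x^{(i)}$ always exists); sample $v^{(i)}\sim x^{(i)}$ using fresh randomness; set $S^{(i)}=S^{(i-1)}\cup\{v^{(i)}\}$. Output $S^{(B)}$. *)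

theory Defs
  imports "HOL-Probability.Probability"
begin

definition marg :: "('v set \<Rightarrow> real) \<Rightarrow> 'v set \<Rightarrow> 'v set \<Rightarrow> real" where
  "marg f T S = f (S \<union> T) - f S"

definition monotone_set_fun :: "'v set \<Rightarrow> ('v set \<Rightarrow> real) \<Rightarrow> bool" where
  "monotone_set_fun V f \<longleftrightarrow> (\<forall>A B. A \<subseteq> B \<and> B \<subseteq> V \<longrightarrow> f A \<le> f B)"

definition submodular :: "'v set \<Rightarrow> ('v set \<Rightarrow> real) \<Rightarrow> bool" where
  "submodular V f \<longleftrightarrow> (\<forall>A B. A \<subseteq> V \<and> B \<subseteq> V \<longrightarrow> f (A \<union> B) + f (A \<inter> B) \<le> f A + f B)"

definition OPT :: "'v set \<Rightarrow> 'c set \<Rightarrow> ('c \<Rightarrow> 'v set \<Rightarrow> real) \<Rightarrow> nat \<Rightarrow> real" where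
  "OPT V C f B = Max ((\<lambda>S. Min ((\<lambda>c. f c S) ` C)) ` {S. S \<subseteq> V \<and> card S \<le> B})"

text \<open>The strategy x i h gives the distribution
  x^(i+1) used in step i+1 (0-indexed i), as a function of the history h = [v^(1),...,v^(i)]
  of previously sampled elements. alg_hist returns the distribution of the history after n steps.\<close>
primrec alg_hist :: "(nat \<Rightarrow> 'v list \<Rightarrow> 'v pmf) \<Rightarrow> nat \<Rightarrow> 'v list pmf" where
  "alg_hist x 0 = return_pmf []"
| "alg_hist x (Suc i) = bind_pmf (alg_hist x i) (\<lambda>h. map_pmf (\<lambda>v. h @ [v]) (x i h))"

definition alg_output :: "(nat \<Rightarrow> 'v list \<Rightarrow> 'v pmf) \<Rightarrow> nat \<Rightarrow> 'v set pmf" where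
  "alg_output x B = map_pmf set (alg_hist x B)"

definition valid_strategy ::
  "'v set \<Rightarrow> 'c set \<Rightarrow> ('c \<Rightarrow> 'v set \<Rightarrow> real) \<Rightarrow> nat \<Rightarrow> real \<Rightarrow> (nat \<Rightarrow> 'v list \<Rightarrow> 'v pmf) \<Rightarrow> bool" where
  "valid_strategy V C f B opt x \<longleftrightarrow>
     (\<forall>i h. i < B \<and> length h = i \<and> set h \<subseteq> V \<longrightarrow>
        set_pmf (x i h) \<subseteq> V \<and>
        (\<forall>c\<in>C. (\<Sum>v\<in>V. pmf (x i h) v * marg (f c) {v} (set h)) \<ge> (opt - f c (set h)) / real B))"

end

theory Submission
  imports Defs
begin

text \<open>With t = \<epsilon>/M and q = 1 - 1/B, the pessimistic estimator
  exp (t q^(B-n) (OPT - f(S_n)) - n t^2 M OPT / (2B)) is a supermartingale along the run of the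
  algorithm: the covering constraint says the expected gain of step n+1 is at least
  (OPT - f(S_n))/B, which pays for the factor q, and a Hoeffding-type bound on the moment generating
  function of a gain in [0, M] costs at most the factor exp (t^2 M OPT / (2B)).
  Markov's inequality applied to the estimator after B steps, together with q^B \<le> 1/e, gives the tail
  bound, even with 2M in place of 4M.\<close>

lemma exp_minus_le_quadratic:
  fixes y :: real
  assumes "0 \<le> y"
  shows "exp (-y) \<le> 1 - y + y\<^sup>2 / 2"
proof -
  define g where "g = (\<lambda>y::real. 1 - y + y\<^sup>2 / 2 - exp (-y))"
  have deriv: "\<And>t. (g has_real_derivative (-1 + t + exp (-t))) (at t)"
    unfolding g_def by (auto intro!: derivative_eq_intros simp: power2_eq_square)
  have "g 0 \<le> g y"
  proof (rule DERIV_nonneg_imp_nondecreasing[OF assms])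
    fix t assume "0 \<le> t" "t \<le> y"
    show "\<exists>d. (g has_real_derivative d) (at t) \<and> 0 \<le> d"
      using deriv exp_ge_add_one_self[of "-t"] by (intro exI[of _ "-1 + t + exp (-t)"]) auto
  qed
  then show ?thesis by (simp add: g_def)
qed

lemma exp_minus_mult_le_chord:
  fixes s M z :: real
  assumes "0 < M" "0 \<le> z" "z \<le> M"
  shows "exp (- s * z) \<le> 1 - z / M * (1 - exp (- s * M))"
proof -
  define t where "t = z / M"
  have t: "0 \<le> t" "t \<le> 1" using assms by (auto simp: t_def)
  have "exp ((1 - t) *\<^sub>R 0 + t *\<^sub>R (- s * M)) \<le> (1 - t) * exp 0 + t * exp (- s * M)"
    using convex_onD[OF exp_convex, of t 0 "- s * M"] t by auto
  moreover have "(1 - t) *\<^sub>R 0 + t *\<^sub>R (- s * M) = - s * z" using assms by (simp add: t_def)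
  ultimately show ?thesis by (simp add: t_def algebra_simps)
qed

lemma one_minus_inverse_power_le_exp:
  assumes "0 < n"
  shows "(1 - 1 / real n) ^ n \<le> exp (-1)"
proof -
  have "1 - 1 / real n \<le> exp (- (1 / real n))" using exp_ge_add_one_self[of "- (1 / real n)"] by simp
  moreover have "0 \<le> 1 - 1 / real n" using assms by (simp add: field_simps)
  ultimately have "(1 - 1 / real n) ^ n \<le> exp (- (1 / real n)) ^ n" by (rule power_mono)
  also have "\<dots> = exp (-1)" using assms by (simp add: exp_of_nat_mult[symmetric])
  finally show ?thesis .
qed

lemma sum_pmf_exp_deviation_le:
  fixes V :: "'v set" and p :: "'v pmf" and X :: "'v \<Rightarrow> real"
  assumes "finite V" "set_pmf p \<subseteq> V" and X: "\<And>v. v \<in> V \<Longrightarrow> 0 \<le> X v \<and> X v \<le> M"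
    and M: "0 < M" and \<nu>: "\<nu> \<le> (\<Sum>v\<in>V. pmf p v * X v)" "\<nu> \<le> K" and "0 \<le> K" and s: "0 \<le> s"
  shows "(\<Sum>v\<in>V. pmf p v * exp (- s * (X v - \<nu>))) \<le> exp (s\<^sup>2 * M * K / 2)"
proof -
  define a where "a = 1 - exp (- s * M)"
  define \<mu> where "\<mu> = (\<Sum>v\<in>V. pmf p v * X v)"
  have a_nonneg: "0 \<le> a" using s M by (simp add: a_def)
  have a_upper: "a \<le> s * M" using exp_ge_add_one_self[of "- s * M"] by (simp add: a_def)
  have a_lower: "s * M - (s * M)\<^sup>2 / 2 \<le> a" using exp_minus_le_quadratic[of "s * M"] s M by (simp add: a_def)
  have "(\<Sum>v\<in>V. pmf p v * exp (- s * (X v - \<nu>))) = exp (s * \<nu>) * (\<Sum>v\<in>V. pmf p v * exp (- s * X v))"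
    by (simp add: sum_distrib_left algebra_simps exp_add[symmetric] exp_diff)
  also have "(\<Sum>v\<in>V. pmf p v * exp (- s * X v)) \<le> (\<Sum>v\<in>V. pmf p v * (1 - X v / M * a))"
    using exp_minus_mult_le_chord[OF M] X unfolding a_def by (intro sum_mono mult_left_mono) auto
  also have "\<dots> = 1 - \<mu> * a / M"
    using sum_pmf_eq_1[OF assms(1,2)]
    by (simp add: \<mu>_def algebra_simps sum_subtractf sum_distrib_left sum_distrib_right sum_divide_distrib)
  also have "\<dots> \<le> exp (- (\<mu> * a / M))" using exp_ge_add_one_self[of "- (\<mu> * a / M)"] by simp
  also have "\<dots> \<le> exp (- (\<nu> * a / M))"
    using \<nu>(1) a_nonneg M by (simp add: \<mu>_def divide_right_mono mult_right_mono)
  finally have "(\<Sum>v\<in>V. pmf p v * exp (- s * (X v - \<nu>))) \<le> exp (\<nu> * (s - a / M))"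
    by (simp add: mult_left_mono exp_add[symmetric] algebra_simps)
  also have "\<dots> \<le> exp (s\<^sup>2 * M * K / 2)"
  proof (cases "0 \<le> \<nu>")
    case True
    have "s - a / M \<le> s\<^sup>2 * M / 2" using a_lower M by (simp add: field_simps power2_eq_square)
    then have "\<nu> * (s - a / M) \<le> \<nu> * (s\<^sup>2 * M / 2)" using True by (rule mult_left_mono)
    also have "\<dots> \<le> K * (s\<^sup>2 * M / 2)" using \<nu>(2) M by (intro mult_right_mono) auto
    finally show ?thesis by (simp add: algebra_simps)
  next
    case False
    moreover have "0 \<le> s - a / M" using a_upper M by (simp add: field_simps)
    ultimately have "\<nu> * (s - a / M) \<le> 0" by (simp add: mult_nonpos_nonneg)
    also have "0 \<le> s\<^sup>2 * M * K / 2" using M \<open>0 \<le> K\<close> by simp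
    finally show ?thesis by simp
  qed
  finally show ?thesis .
qed

lemma monotone_set_funD:
  "monotone_set_fun V f \<Longrightarrow> A \<subseteq> B \<Longrightarrow> B \<subseteq> V \<Longrightarrow> f A \<le> f B"
  unfolding monotone_set_fun_def by blast

lemma submodularD:
  "submodular V f \<Longrightarrow> A \<subseteq> V \<Longrightarrow> B \<subseteq> V \<Longrightarrow> f (A \<union> B) + f (A \<inter> B) \<le> f A + f B"
  unfolding submodular_def by blast

lemma marg_singleton_nonneg:
  assumes "monotone_set_fun V f" "S \<subseteq> V" "v \<in> V"
  shows "0 \<le> marg f {v} S"
proof -
  have "f S \<le> f (S \<union> {v})" by (rule monotone_set_funD[OF assms(1)]) (use assms(2,3) in auto)
  then show ?thesis by (simp add: marg_def)
qed

lemma marg_singleton_le_marg_empty: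
  assumes "monotone_set_fun V f" "submodular V f" "S \<subseteq> V" "v \<in> V"
  shows "marg f {v} S \<le> marg f {v} {}"
proof -
  have "f (S \<union> {v}) + f (S \<inter> {v}) \<le> f S + f {v}"
    by (rule submodularD[OF assms(2)]) (use assms(3,4) in auto)
  moreover have "f {} \<le> f (S \<inter> {v})" by (rule monotone_set_funD[OF assms(1)]) (use assms(4) in auto)
  ultimately show ?thesis by (simp add: marg_def)
qed

lemma OPT_nonneg:
  assumes "finite V" "finite C" "C \<noteq> {}" "\<And>c S. c \<in> C \<Longrightarrow> S \<subseteq> V \<Longrightarrow> 0 \<le> f c S"
  shows "0 \<le> OPT V C f B"
proof -
  have "0 \<le> Min ((\<lambda>c. f c {}) ` C)" using assms(2-4) by (subst Min_ge_iff) auto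
  also have "\<dots> \<le> OPT V C f B" unfolding OPT_def using assms(1) by (intro Max_ge) auto
  finally show ?thesis .
qed

lemma alg_hist_support:
  assumes "\<And>i h. i < N \<Longrightarrow> length h = i \<Longrightarrow> set h \<subseteq> V \<Longrightarrow> set_pmf (x i h) \<subseteq> V"
    and "n \<le> N" "h \<in> set_pmf (alg_hist x n)"
  shows "length h = n \<and> set h \<subseteq> V"
  using assms(2,3)
proof (induction n arbitrary: h)
  case 0
  then show ?case by simp
next
  case (Suc n)
  then obtain h0 v where h0: "h0 \<in> set_pmf (alg_hist x n)" and v: "v \<in> set_pmf (x n h0)"
    and h: "h = h0 @ [v]" by auto
  have "length h0 = n \<and> set h0 \<subseteq> V" using Suc h0 by simp
  with assms(1) Suc.prems(1) have "set_pmf (x n h0) \<subseteq> V" by simp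
  then show ?case using \<open>length h0 = n \<and> set h0 \<subseteq> V\<close> v h by auto
qed

lemma alg_hist_nn_integral_le:
  fixes \<Phi> :: "nat \<Rightarrow> 'v list \<Rightarrow> ennreal"
  assumes step: "\<And>n h. n < N \<Longrightarrow> h \<in> set_pmf (alg_hist x n) \<Longrightarrow>
      (\<integral>\<^sup>+v. \<Phi> (Suc n) (h @ [v]) \<partial>x n h) \<le> \<Phi> n h"
    and "n \<le> N"
  shows "(\<integral>\<^sup>+h. \<Phi> n h \<partial>alg_hist x n) \<le> \<Phi> 0 []"
  using assms(2)
proof (induction n)
  case 0
  then show ?case by simp
next
  case (Suc n)
  have "(\<integral>\<^sup>+h. \<Phi> (Suc n) h \<partial>alg_hist x (Suc n))
      = (\<integral>\<^sup>+h. (\<integral>\<^sup>+v. \<Phi> (Suc n) (h @ [v]) \<partial>x n h) \<partial>alg_hist x n)"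
    by simp
  also have "\<dots> \<le> (\<integral>\<^sup>+h. \<Phi> n h \<partial>alg_hist x n)"
    using step Suc.prems by (intro nn_integral_mono_AE AE_pmfI) simp
  also have "\<dots> \<le> \<Phi> 0 []" using Suc by simp
  finally show ?case .
qed

lemma measure_pmf_prob_le_nn_integral:
  assumes "\<And>x. x \<in> set_pmf p \<Longrightarrow> x \<in> A \<Longrightarrow> 1 \<le> g x"
    and "(\<integral>\<^sup>+x. ennreal (g x) \<partial>p) \<le> ennreal c" "0 \<le> c"
  shows "measure_pmf.prob p A \<le> c"
proof -
  have "emeasure (measure_pmf p) A = (\<integral>\<^sup>+x. indicator A x \<partial>p)" by simp
  also have "\<dots> \<le> (\<integral>\<^sup>+x. ennreal (g x) \<partial>p)"
    using assms(1) by (intro nn_integral_mono_AE AE_pmfI) (simp add: indicator_def)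
  also have "\<dots> \<le> ennreal c" by (rule assms(2))
  finally show ?thesis
    using ennreal_le_iff[OF assms(3)] by (simp add: measure_pmf.emeasure_eq_measure)
qed

lemma nn_integral_measure_pmf_finite_support:
  fixes f :: "'a \<Rightarrow> real"
  assumes "finite A" "set_pmf p \<subseteq> A" "\<And>x. x \<in> A \<Longrightarrow> 0 \<le> f x"
  shows "(\<integral>\<^sup>+x. ennreal (f x) \<partial>p) = ennreal (\<Sum>x\<in>A. f x * pmf p x)"
proof -
  have "(\<integral>\<^sup>+x. ennreal (f x) \<partial>p) = (\<Sum>x\<in>A. ennreal (f x) * ennreal (pmf p x))"
    using assms by (subst nn_integral_measure_pmf_support[of A]) (auto simp: set_pmf_eq)
  also have "\<dots> = (\<Sum>x\<in>A. ennreal (f x * pmf p x))"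
    using assms(3) by (intro sum.cong) (simp_all add: ennreal_mult)
  also have "\<dots> = ennreal (\<Sum>x\<in>A. f x * pmf p x)"
    using assms(3) by (intro sum_ennreal) simp
  finally show ?thesis .
qed

locale covering_process =
  fixes V :: "'v set" and g :: "'v set \<Rightarrow> real" and B :: nat and opt :: real
    and x :: "nat \<Rightarrow> 'v list \<Rightarrow> 'v pmf"
  assumes finite_V: "finite V"
    and nonneg: "\<And>S. S \<subseteq> V \<Longrightarrow> 0 \<le> g S"
    and monotone: "monotone_set_fun V g" and submodular: "submodular V g"
    and B_pos: "0 < B" and opt_nonneg: "0 \<le> opt"
    and strategy_support: "\<And>i h. i < B \<Longrightarrow> length h = i \<Longrightarrow> set h \<subseteq> V \<Longrightarrow> set_pmf (x i h) \<subseteq> V"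
    and strategy_covers: "\<And>i h. i < B \<Longrightarrow> length h = i \<Longrightarrow> set h \<subseteq> V \<Longrightarrow>
      (opt - g (set h)) / real B \<le> (\<Sum>v\<in>V. pmf (x i h) v * marg g {v} (set h))"
begin

definition max_gain :: real where
  "max_gain = (MAX v\<in>V. marg g {v} {})"

lemma marg_bounds:
  assumes "S \<subseteq> V" "v \<in> V"
  shows "0 \<le> marg g {v} S \<and> marg g {v} S \<le> max_gain"
proof -
  have "marg g {v} {} \<le> max_gain" unfolding max_gain_def using finite_V assms(2) by simp
  then show ?thesis
    using marg_singleton_nonneg[OF monotone assms] marg_singleton_le_marg_empty[OF monotone submodular assms]
    by simp
qed

definition potential :: "real \<Rightarrow> nat \<Rightarrow> 'v list \<Rightarrow> real" where
  "potential t n h = exp (t * (1 - 1 / real B) ^ (B - n) * (opt - g (set h))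
                          - real n * (t\<^sup>2 * max_gain * opt / (2 * real B)))"

lemma potential_snoc:
  assumes "n < B"
  shows "potential t (Suc n) (h @ [v]) = potential t n h * exp (- (t\<^sup>2 * max_gain * opt / (2 * real B)))
           * exp (- (t * (1 - 1 / real B) ^ (B - Suc n)) * (marg g {v} (set h) - (opt - g (set h)) / real B))"
proof -
  define w where "w = (1 - 1 / real B) ^ (B - Suc n)"
  define c where "c = t\<^sup>2 * max_gain * opt / (2 * real B)"
  define D where "D = opt - g (set h)"
  define X where "X = marg g {v} (set h)"
  have gain: "g (set (h @ [v])) = g (set h) + X" by (simp add: X_def marg_def Un_commute)
  have "(1 - 1 / real B) ^ (B - n) = (1 - 1 / real B) * w"
    using assms by (simp add: w_def Suc_diff_Suc[symmetric])
  then have "potential t n h = exp (t * ((1 - 1 / real B) * w) * D - real n * c)"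
    by (simp add: potential_def c_def D_def)
  moreover have "potential t (Suc n) (h @ [v]) = exp (t * w * (D - X) - (real n + 1) * c)"
    unfolding potential_def gain by (simp add: w_def c_def D_def algebra_simps)
  moreover have "t * w * (D - X) - (real n + 1) * c
      = (t * ((1 - 1 / real B) * w) * D - real n * c) + - c + - (t * w) * (X - D / real B)"
    by (simp add: algebra_simps)
  ultimately show ?thesis by (simp add: exp_add[symmetric] w_def c_def D_def X_def)
qed

lemma potential_step:
  assumes "0 \<le> t" "0 < max_gain" "n < B" "length h = n" "set h \<subseteq> V"
  shows "(\<integral>\<^sup>+v. ennreal (potential t (Suc n) (h @ [v])) \<partial>x n h) \<le> ennreal (potential t n h)"
proof -
  define w where "w = (1 - 1 / real B) ^ (B - Suc n)"
  define c where "c = t\<^sup>2 * max_gain * opt / (2 * real B)"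
  define Z where "Z = (\<lambda>v. exp (- (t * w) * (marg g {v} (set h) - (opt - g (set h)) / real B)))"
  have support: "set_pmf (x n h) \<subseteq> V" using strategy_support assms(3-5) by blast
  have w: "0 \<le> w" "w \<le> 1" using B_pos by (auto simp: w_def power_le_one)
  have "(\<Sum>v\<in>V. pmf (x n h) v * Z v) \<le> exp ((t * w)\<^sup>2 * max_gain * (opt / real B) / 2)"
    unfolding Z_def
  proof (rule sum_pmf_exp_deviation_le[OF finite_V support])
    show "(opt - g (set h)) / real B \<le> opt / real B"
      using nonneg[OF assms(5)] by (simp add: divide_right_mono)
  qed (use marg_bounds assms strategy_covers opt_nonneg w in auto)
  also have "\<dots> \<le> exp c"
  proof -
    have "(t * w)\<^sup>2 \<le> t\<^sup>2" using w by (simp add: power_mult_distrib mult_left_le power_le_one)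
    then have "(t * w)\<^sup>2 * (max_gain * opt / (2 * real B)) \<le> t\<^sup>2 * (max_gain * opt / (2 * real B))"
      using assms(2) opt_nonneg by (intro mult_right_mono) auto
    then show ?thesis by (simp add: c_def)
  qed
  finally have mgf_bound: "(\<Sum>v\<in>V. pmf (x n h) v * Z v) \<le> exp c" .
  have snoc: "potential t (Suc n) (h @ [v]) = potential t n h * exp (- c) * Z v" for v
    using potential_snoc[OF assms(3)] by (simp add: c_def Z_def w_def)
  have "(\<integral>\<^sup>+v. ennreal (potential t (Suc n) (h @ [v])) \<partial>x n h)
      = ennreal (\<Sum>v\<in>V. potential t (Suc n) (h @ [v]) * pmf (x n h) v)"
    using finite_V support by (rule nn_integral_measure_pmf_finite_support) (simp add: potential_def)
  also have "\<dots> = ennreal (potential t n h * exp (- c) * (\<Sum>v\<in>V. pmf (x n h) v * Z v))"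
    by (simp add: snoc sum_distrib_left mult_ac)
  also have "\<dots> \<le> ennreal (potential t n h * exp (- c) * exp c)"
    using mgf_bound by (intro ennreal_leI mult_left_mono) (auto simp: potential_def)
  also have "\<dots> = ennreal (potential t n h)" by (simp add: exp_minus field_simps)
  finally show ?thesis .
qed

lemma prob_le_potential:
  assumes "0 < max_gain" "0 \<le> t"
  shows "measure_pmf.prob (alg_output x B) {S. g S \<le> \<tau> * opt}
           \<le> potential t 0 [] * exp (t\<^sup>2 * max_gain * opt / 2 - t * (1 - \<tau>) * opt)"
proof -
  define k where "k = exp (t\<^sup>2 * max_gain * opt / 2 - t * (1 - \<tau>) * opt)"
  have k: "0 \<le> k" by (simp add: k_def)
  have step: "(\<integral>\<^sup>+v. ennreal (potential t (Suc n) (h @ [v])) \<partial>x n h) \<le> ennreal (potential t n h)"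
    if "n < B" "h \<in> set_pmf (alg_hist x n)" for n h
  proof -
    have "length h = n \<and> set h \<subseteq> V"
      using alg_hist_support[of B V x n h] strategy_support that by simp
    then show ?thesis using potential_step[OF assms(2,1) that(1)] by blast
  qed
  have "(\<integral>\<^sup>+h. ennreal (potential t B h) \<partial>alg_hist x B) \<le> ennreal (potential t 0 [])"
    using alg_hist_nn_integral_le[of B x "\<lambda>n h. ennreal (potential t n h)" B] step by simp
  then have "(\<integral>\<^sup>+h. ennreal (potential t B h) \<partial>alg_hist x B) * ennreal k \<le> ennreal (potential t 0 []) * ennreal k"
    by (rule mult_right_mono) simp
  then have estimator: "(\<integral>\<^sup>+h. ennreal (potential t B h * k) \<partial>alg_hist x B) \<le> ennreal (potential t 0 [] * k)"
    by (simp add: ennreal_mult''[OF k] nn_integral_multc)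
  have weight: "1 \<le> potential t B h * k" if "g (set h) \<le> \<tau> * opt" for h
  proof -
    have "real B * (t\<^sup>2 * max_gain * opt / (2 * real B)) = t\<^sup>2 * max_gain * opt / 2"
      using B_pos by simp
    then have "potential t B h * k = exp (t * (\<tau> * opt - g (set h)))"
      by (simp add: potential_def k_def exp_add[symmetric] algebra_simps)
    then show ?thesis using that assms(2) by simp
  qed
  have "measure_pmf.prob (alg_hist x B) (set -` {S. g S \<le> \<tau> * opt}) \<le> potential t 0 [] * k"
  proof (rule measure_pmf_prob_le_nn_integral[OF _ estimator])
    fix h assume "h \<in> set_pmf (alg_hist x B)" "h \<in> set -` {S. g S \<le> \<tau> * opt}"
    then show "1 \<le> potential t B h * k" using weight by simp
  qed (simp add: potential_def k)
  then show ?thesis by (simp add: alg_output_def k_def)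
qed

lemma tail_bound:
  assumes "0 < \<epsilon>" "0 < max_gain"
  shows "measure_pmf.prob (alg_output x B) {S. g S \<le> (1 - 1 / exp 1 - \<epsilon>) * opt}
           \<le> exp (- (\<epsilon>\<^sup>2 * opt) / (2 * max_gain))"
proof -
  define t where "t = \<epsilon> / max_gain"
  have t: "0 \<le> t" using assms by (simp add: t_def)
  have "(1 - 1 / real B) ^ B * (opt - g {}) \<le> (1 - 1 / real B) ^ B * opt"
    using nonneg[of "{}"] B_pos by (intro mult_left_mono) (auto simp: field_simps)
  also have "\<dots> \<le> exp (-1) * opt"
    using one_minus_inverse_power_le_exp[OF B_pos] opt_nonneg by (rule mult_right_mono)
  finally have "potential t 0 [] \<le> exp (t * (exp (-1) * opt))"
    using t by (simp add: potential_def mult.assoc mult_left_mono)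
  then have "potential t 0 [] * exp (t\<^sup>2 * max_gain * opt / 2 - t * (1 - (1 - 1 / exp 1 - \<epsilon>)) * opt)
      \<le> exp (t * (exp (-1) * opt)) * exp (t\<^sup>2 * max_gain * opt / 2 - t * (1 - (1 - 1 / exp 1 - \<epsilon>)) * opt)"
    by (rule mult_right_mono) simp
  with prob_le_potential[OF assms(2) t]
  have "measure_pmf.prob (alg_output x B) {S. g S \<le> (1 - 1 / exp 1 - \<epsilon>) * opt}
      \<le> exp (t * (exp (-1) * opt)) * exp (t\<^sup>2 * max_gain * opt / 2 - t * (1 - (1 - 1 / exp 1 - \<epsilon>)) * opt)"
    by (rule order_trans)
  also have "\<dots> = exp (t\<^sup>2 * max_gain * opt / 2 - t * \<epsilon> * opt)"
  proof -
    have "1 - (1 - 1 / exp 1 - \<epsilon>) = exp (-1) + \<epsilon>" by (simp add: exp_minus inverse_eq_divide)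
    then have "t * (exp (-1) * opt) + (t\<^sup>2 * max_gain * opt / 2 - t * (1 - (1 - 1 / exp 1 - \<epsilon>)) * opt)
        = t\<^sup>2 * max_gain * opt / 2 - t * \<epsilon> * opt"
      by (simp only:) (simp add: algebra_simps)
    then show ?thesis by (simp only: mult_exp_exp)
  qed
  also have "t\<^sup>2 * max_gain * opt / 2 - t * \<epsilon> * opt = - (\<epsilon>\<^sup>2 * opt) / (2 * max_gain)"
    using assms(2) by (simp add: t_def power2_eq_square field_simps)
  finally show ?thesis .
qed

end

theorem lemma4:
  fixes V :: "'v set" and C :: "'c set" and f :: "'c \<Rightarrow> 'v set \<Rightarrow> real"
    and B :: nat and x :: "nat \<Rightarrow> 'v list \<Rightarrow> 'v pmf" and \<epsilon> :: real and c :: 'c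
  assumes "finite V" "V \<noteq> {}" "finite C" "C \<noteq> {}"
    and "\<And>c S. c \<in> C \<Longrightarrow> S \<subseteq> V \<Longrightarrow> f c S \<ge> 0"
    and "\<And>c. c \<in> C \<Longrightarrow> monotone_set_fun V (f c)"
    and "\<And>c. c \<in> C \<Longrightarrow> submodular V (f c)"
    and "B > 0"
    and "valid_strategy V C f B (OPT V C f B) x"
    and "\<epsilon> > 0"
    and "c \<in> C"
    and "(MAX v\<in>V. marg (f c) {v} {}) > 0"
  shows "measure_pmf.prob (alg_output x B)
           {S. f c S \<le> (1 - 1 / exp 1 - \<epsilon>) * OPT V C f B}
         \<le> exp (- (\<epsilon>\<^sup>2 * OPT V C f B) / (4 * (MAX v\<in>V. marg (f c) {v} {})))"
proof -
  have opt_nonneg: "0 \<le> OPT V C f B" using OPT_nonneg assms(1,3-5) by blast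
  have valid: "set_pmf (x i h) \<subseteq> V \<and>
      (OPT V C f B - f c (set h)) / real B \<le> (\<Sum>v\<in>V. pmf (x i h) v * marg (f c) {v} (set h))"
    if "i < B" "length h = i" "set h \<subseteq> V" for i h
    using assms(9,11) that unfolding valid_strategy_def by blast
  interpret covering_process V "f c" B "OPT V C f B" x
    using assms(1,8) assms(5-7)[OF assms(11)] opt_nonneg valid by unfold_locales auto
  have "measure_pmf.prob (alg_output x B) {S. f c S \<le> (1 - 1 / exp 1 - \<epsilon>) * OPT V C f B}
      \<le> exp (- (\<epsilon>\<^sup>2 * OPT V C f B) / (2 * max_gain))"
    using tail_bound[OF assms(10)] assms(12) unfolding max_gain_def by blast
  also have "\<dots> \<le> exp (- (\<epsilon>\<^sup>2 * OPT V C f B) / (4 * max_gain))"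
  proof -
    have "\<epsilon>\<^sup>2 * OPT V C f B / (4 * max_gain) \<le> \<epsilon>\<^sup>2 * OPT V C f B / (2 * max_gain)"
      using assms(12) opt_nonneg by (intro divide_left_mono) (auto simp: max_gain_def)
    then show ?thesis by simp
  qed
  finally show ?thesis by (simp add: max_gain_def)
qed

end
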